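(* Let $\nu,a,b\in\mathbb{R}$ with $-\nu<b<a$, and let $\Omega$ be an open subset of $\{(x,t):t>0\}$. (i) Suppose $u_2,u_3$ are differentiable functions on $\Omega$ with $-\nu<u_3<u_2<a$ satisfying $x=\lambda_2(a,u_2,u_3)\,t$ and $x=\lambda_3(a,u_2,u_3)\,t$ on $\Omega$. Then $u_1\equiv a$, $u_2$, $u_3$ satisfy the Whitham equations $\partial_t u_i+\lambda_i(u_1,u_2,u_3)\partial_x u_i=0$, $i=1,2,3$, on $\Omega$. (ii) Suppose $u_2$ is a differentiable function on $\Omega$ with $b<u_2<a$ satisfying $x=\lambda_2(a,u_2,b)\,t$ on $\Omega$. Then $u_1\equiv a$, $u_2$, $u_3\equiv b$ satisfy the same Whitham equations on $\Omega$.
   Context: For $-\nu<u_3<u_2<u_1$ define $$I(u_1,u_2,u_3)=\int_{u_3}^{u_2}\frac{\eta+\nu}{\sqrt{(\eta+\nu)(u_1-\eta)(u_2-\eta)(\eta-u_3)}}\,d\eta,$$ and for $i=1,2,3$ $$\lambda_i=u_1+u_2+u_3+2\nu-\frac{I}{\partial I/\partial u_i}.$$ *)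

theory Defs
  imports "HOL-Analysis.Analysis"
begin

text \<open>The integral I(u1,u2,u3) (depending on the parameter nu), taken as a
  Henstock--Kurzweil integral over [u3,u2] (the integrand is nonnegative and
  absolutely integrable, with integrable endpoint singularities).\<close>
definition WI :: "real \<Rightarrow> real \<Rightarrow> real \<Rightarrow> real \<Rightarrow> real" where
  "WI \<nu> u1 u2 u3 = integral {u3..u2}
     (\<lambda>\<eta>. (\<eta> + \<nu>) / sqrt ((\<eta> + \<nu>) * (u1 - \<eta>) * (u2 - \<eta>) * (\<eta> - u3)))"

definition dWI1 :: "real \<Rightarrow> real \<Rightarrow> real \<Rightarrow> real \<Rightarrow> real" where
  "dWI1 \<nu> u1 u2 u3 = deriv (\<lambda>s. WI \<nu> s u2 u3) u1"
definition dWI2 :: "real \<Rightarrow> real \<Rightarrow> real \<Rightarrow> real \<Rightarrow> real" where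
  "dWI2 \<nu> u1 u2 u3 = deriv (\<lambda>s. WI \<nu> u1 s u3) u2"
definition dWI3 :: "real \<Rightarrow> real \<Rightarrow> real \<Rightarrow> real \<Rightarrow> real" where
  "dWI3 \<nu> u1 u2 u3 = deriv (\<lambda>s. WI \<nu> u1 u2 s) u3"

definition lam1 :: "real \<Rightarrow> real \<Rightarrow> real \<Rightarrow> real \<Rightarrow> real" where
  "lam1 \<nu> u1 u2 u3 = u1 + u2 + u3 + 2 * \<nu> - WI \<nu> u1 u2 u3 / dWI1 \<nu> u1 u2 u3"
definition lam2 :: "real \<Rightarrow> real \<Rightarrow> real \<Rightarrow> real \<Rightarrow> real" where
  "lam2 \<nu> u1 u2 u3 = u1 + u2 + u3 + 2 * \<nu> - WI \<nu> u1 u2 u3 / dWI2 \<nu> u1 u2 u3"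
definition lam3 :: "real \<Rightarrow> real \<Rightarrow> real \<Rightarrow> real \<Rightarrow> real" where
  "lam3 \<nu> u1 u2 u3 = u1 + u2 + u3 + 2 * \<nu> - WI \<nu> u1 u2 u3 / dWI3 \<nu> u1 u2 u3"

definition pdx :: "(real \<times> real \<Rightarrow> real) \<Rightarrow> real \<times> real \<Rightarrow> real" where
  "pdx u p = deriv (\<lambda>y. u (y, snd p)) (fst p)"
definition pdt :: "(real \<times> real \<Rightarrow> real) \<Rightarrow> real \<times> real \<Rightarrow> real" where
  "pdt u p = deriv (\<lambda>s. u (fst p, s)) (snd p)"

definition whitham :: "real \<Rightarrow> (real \<times> real) set \<Rightarrow> (real \<times> real \<Rightarrow> real)
    \<Rightarrow> (real \<times> real \<Rightarrow> real) \<Rightarrow> (real \<times> real \<Rightarrow> real) \<Rightarrow> bool" where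
  "whitham \<nu> \<Omega> u1 u2 u3 \<longleftrightarrow> (\<forall>p\<in>\<Omega>.
     pdt u1 p + lam1 \<nu> (u1 p) (u2 p) (u3 p) * pdx u1 p = 0 \<and>
     pdt u2 p + lam2 \<nu> (u1 p) (u2 p) (u3 p) * pdx u2 p = 0 \<and>
     pdt u3 p + lam3 \<nu> (u1 p) (u2 p) (u3 p) * pdx u3 p = 0)"

end

theory Submission
  imports Defs
begin

(* With u1 = a fixed, the substitution eta = u3 + (u2 - u3) sin^2 theta turns I into an integral
   over [0, pi/2] of a smooth kernel K(eta), which may be differentiated under the integral sign.
   Integrating the theta-derivative of K'(eta) sin theta cos theta (which vanishes at both ends)
   gives the Euler-Poisson-Darboux identity 2 (u2 - u3) I_23 = I_2 - I_3.  Where lambda_2 = lambda_3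
   we have I_2 = I_3, hence I_23 = 0, and then d lambda_2 / d u3 = d lambda_3 / d u2 = 0.  So the
   gradient of lambda_i(a, u2, u3) along the solution is a multiple of the gradient of u_i, and
   differentiating x = lambda_i t in x and in t yields u_i,t + lambda_i u_i,x = 0. *)

lemma has_derivative_partial_fst:
  fixes f :: "real \<times> real \<Rightarrow> real"
  assumes "(f has_derivative D) (at (x, y))"
  shows "((\<lambda>x'. f (x', y)) has_real_derivative D (1, 0)) (at x)"
proof -
  have "((\<lambda>x'. (x', y)) has_derivative (\<lambda>h. (h, 0))) (at x)"
    by (auto intro!: derivative_eq_intros)
  from has_derivative_compose[OF this assms]
  have "((\<lambda>x'. f (x', y)) has_derivative (\<lambda>h. D (h, 0))) (at x)" by simp
  moreover have "(\<lambda>h. D (h, 0)) = (*) (D (1, 0))"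
  proof
    fix h :: real
    show "D (h, 0) = D (1, 0) * h"
      using linear_scale[OF has_derivative_linear[OF assms], of h "(1, 0)"] by (simp add: mult.commute)
  qed
  ultimately show ?thesis
    by (simp add: has_field_derivative_def)
qed

lemma has_derivative_partial_snd:
  fixes f :: "real \<times> real \<Rightarrow> real"
  assumes "(f has_derivative D) (at (x, y))"
  shows "((\<lambda>y'. f (x, y')) has_real_derivative D (0, 1)) (at y)"
proof -
  have "((\<lambda>y'. (x, y')) has_derivative (\<lambda>h. (0, h))) (at y)"
    by (auto intro!: derivative_eq_intros)
  from has_derivative_compose[OF this assms]
  have "((\<lambda>y'. f (x, y')) has_derivative (\<lambda>h. D (0, h))) (at y)" by simp
  moreover have "(\<lambda>h. D (0, h)) = (*) (D (0, 1))"
  proof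
    fix h :: real
    show "D (0, h) = D (0, 1) * h"
      using linear_scale[OF has_derivative_linear[OF assms], of h "(0, 1)"] by (simp add: mult.commute)
  qed
  ultimately show ?thesis
    by (simp add: has_field_derivative_def)
qed

lemma has_derivative_compose_pair:
  fixes L :: "real \<times> real \<Rightarrow> real"
  assumes "(L has_derivative (\<lambda>h. \<alpha> * fst h + \<beta> * snd h)) (at (u p, v p))"
    and "(u has_derivative D) (at p)" and "(v has_derivative E) (at p)"
  shows "((\<lambda>q. L (u q, v q)) has_derivative (\<lambda>h. \<alpha> * D h + \<beta> * E h)) (at p)"
  using has_derivative_compose[OF has_derivative_Pair[OF assms(2,3)] assms(1)] by simp

lemma has_derivative_coordinate_sum_minus_quotient:
  fixes J K :: "real \<times> real \<Rightarrow> real"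
  assumes J: "(J has_derivative (\<lambda>h. Js * fst h + Jr * snd h)) (at x)"
    and K: "(K has_derivative (\<lambda>h. Ks * fst h + Kr * snd h)) (at x)" and K0: "K x \<noteq> 0"
  shows "((\<lambda>y. c + fst y + snd y - J y / K y) has_derivative
    (\<lambda>h. (1 - Js / K x + J x * Ks / (K x)\<^sup>2) * fst h + (1 - Jr / K x + J x * Kr / (K x)\<^sup>2) * snd h)) (at x)"
proof -
  have "((\<lambda>y. c + fst y + snd y) has_derivative (\<lambda>h. fst h + snd h)) (at x)"
    by (auto intro!: derivative_eq_intros)
  from has_derivative_diff[OF this has_derivative_divide'[OF J K K0]]
  show ?thesis
    by (rule has_derivative_eq_rhs) (use K0 in \<open>simp add: fun_eq_iff field_simps power2_eq_square\<close>)
qed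

definition sin2_integral :: "(real \<Rightarrow> real) \<Rightarrow> (real \<Rightarrow> real) \<Rightarrow> real \<Rightarrow> real \<Rightarrow> real" where
  "sin2_integral f w s r = integral {0..pi/2} (\<lambda>\<theta>. f (r + (s - r) * (sin \<theta>)\<^sup>2) * w \<theta>)"

lemma sin2_combination_between:
  "min r s \<le> r + (s - r) * (sin \<theta>)\<^sup>2 \<and> r + (s - r) * (sin \<theta>)\<^sup>2 \<le> max r (s::real)"
proof -
  have S: "0 \<le> (sin \<theta>)\<^sup>2" "(sin \<theta>)\<^sup>2 \<le> 1" by (simp_all add: abs_square_le_1)
  show ?thesis
  proof (cases "r \<le> s")
    case True
    then show ?thesis using S mult_left_le[of "(sin \<theta>)\<^sup>2" "s - r"] by auto
  next
    case False
    have "0 \<le> (r - s) * (sin \<theta>)\<^sup>2" "(r - s) * (sin \<theta>)\<^sup>2 \<le> r - s"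
      using False S by (auto intro: mult_left_le)
    moreover have "(s - r) * (sin \<theta>)\<^sup>2 = - ((r - s) * (sin \<theta>)\<^sup>2)" by (simp add: algebra_simps)
    moreover have "min r s = s" "max r s = r" using False by auto
    ultimately show ?thesis by linarith
  qed
qed

lemma sin2_combination_in_interval:
  assumes "r \<in> {lo<..<hi}" "s \<in> {lo<..<hi}"
  shows "r + (s - r) * (sin \<theta>)\<^sup>2 \<in> {lo<..<hi::real}"
  using sin2_combination_between[of r s \<theta>] assms by auto

lemma continuous_on_sin2_integrand:
  assumes "continuous_on {lo<..<hi} f" "r \<in> {lo<..<hi}" "s \<in> {lo<..<hi::real}"
  shows "continuous_on UNIV (\<lambda>\<theta>. f (r + (s - r) * (sin \<theta>)\<^sup>2))"
  by (rule continuous_on_compose2[OF assms(1)])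
    (auto intro!: continuous_intros sin2_combination_in_interval assms(2,3))

lemma sin2_integral_has_integral:
  assumes f: "continuous_on {lo<..<hi} f" and w: "continuous_on UNIV w"
    and "r \<in> {lo<..<hi}" "s \<in> {lo<..<hi::real}"
  shows "((\<lambda>\<theta>. f (r + (s - r) * (sin \<theta>)\<^sup>2) * w \<theta>) has_integral sin2_integral f w s r) {0..pi/2}"
proof -
  have "continuous_on {0..pi/2} (\<lambda>\<theta>. f (r + (s - r) * (sin \<theta>)\<^sup>2) * w \<theta>)"
    using continuous_on_sin2_integrand[OF assms(1,3,4)] w
    by (intro continuous_intros) (auto elim: continuous_on_subset)
  then show ?thesis unfolding sin2_integral_def
    by (intro integrable_integral integrable_continuous_real)
qed

lemma continuous_on_sin2_integrand_param:
  fixes k v :: "real \<Rightarrow> real"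
  assumes k: "continuous_on {lo<..<hi} k" and v: "continuous_on UNIV v"
  shows "continuous_on (({lo<..<hi} \<times> {lo<..<hi}) \<times> UNIV)
    (\<lambda>(x, \<theta>). k (snd x + (fst x - snd x) * (sin \<theta>)\<^sup>2) * v (\<theta>::real))"
proof -
  have "continuous_on (({lo<..<hi} \<times> {lo<..<hi}) \<times> UNIV)
      (\<lambda>y. k (snd (fst y) + (fst (fst y) - snd (fst y)) * (sin (snd y))\<^sup>2))"
    by (rule continuous_on_compose2[OF k])
      (auto intro!: continuous_intros sin2_combination_in_interval simp: mem_Times_iff)
  moreover have "continuous_on (({lo<..<hi} \<times> {lo<..<hi}) \<times> UNIV) (\<lambda>y. v (snd y))"
    by (rule continuous_on_compose2[OF v]) (auto intro: continuous_intros)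
  ultimately show ?thesis unfolding split_beta by (rule continuous_on_mult)
qed

lemma sin2_integrand_has_derivative:
  assumes f': "(f has_real_derivative f' (snd x + (fst x - snd x) * (sin \<theta>)\<^sup>2))
      (at (snd x + (fst x - snd x) * (sin \<theta>)\<^sup>2))"
  shows "((\<lambda>x. f (snd x + (fst x - snd x) * (sin \<theta>)\<^sup>2) * w \<theta>) has_derivative
    (\<lambda>h. f' (snd x + (fst x - snd x) * (sin \<theta>)\<^sup>2) * ((sin \<theta>)\<^sup>2 * w \<theta>) * fst h
       + f' (snd x + (fst x - snd x) * (sin \<theta>)\<^sup>2) * ((cos \<theta>)\<^sup>2 * w \<theta>) * snd h)) (at x within U)"
proof -
  have "((\<lambda>x. snd x + (fst x - snd x) * (sin \<theta>)\<^sup>2) has_derivative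
      (\<lambda>h. (sin \<theta>)\<^sup>2 * fst h + (cos \<theta>)\<^sup>2 * snd h)) (at x within U)"
    by (auto intro!: derivative_eq_intros simp: cos_squared_eq algebra_simps)
  from has_derivative_compose[OF this f'[unfolded has_field_derivative_def]]
  show ?thesis
    by (rule has_derivative_mult_left[THEN has_derivative_eq_rhs]) (simp add: fun_eq_iff algebra_simps)
qed

lemma sin2_integral_has_derivative:
  assumes f': "\<And>\<eta>. \<eta> \<in> {lo<..<hi} \<Longrightarrow> (f has_real_derivative f' \<eta>) (at \<eta>)"
    and cf': "continuous_on {lo<..<hi} f'" and w: "continuous_on UNIV w"
    and s: "s \<in> {lo<..<hi}" and r: "r \<in> {lo<..<hi::real}"
  shows "((\<lambda>x. sin2_integral f w (fst x) (snd x)) has_derivative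
     (\<lambda>h. sin2_integral f' (\<lambda>\<theta>. (sin \<theta>)\<^sup>2 * w \<theta>) s r * fst h
        + sin2_integral f' (\<lambda>\<theta>. (cos \<theta>)\<^sup>2 * w \<theta>) s r * snd h)) (at (s, r))"
proof -
  define U where "U = {lo<..<hi} \<times> {lo<..<hi}"
  define g where "g x \<theta> = f (snd x + (fst x - snd x) * (sin \<theta>)\<^sup>2) * w \<theta>" for x \<theta>
  define G :: "real \<times> real \<Rightarrow> real \<Rightarrow> (real \<times> real) \<Rightarrow>\<^sub>L real"
    where "G x \<theta> = (f' (snd x + (fst x - snd x) * (sin \<theta>)\<^sup>2) * ((sin \<theta>)\<^sup>2 * w \<theta>)) *\<^sub>R fst_blinfun
      + (f' (snd x + (fst x - snd x) * (sin \<theta>)\<^sup>2) * ((cos \<theta>)\<^sup>2 * w \<theta>)) *\<^sub>R snd_blinfun" for x \<theta>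
  have blinfun_G: "blinfun_apply (c *\<^sub>R fst_blinfun + d *\<^sub>R snd_blinfun) = (\<lambda>h. c * fst h + d * snd h)"
    for c d :: real
    by (simp add: fun_eq_iff blinfun.add_left blinfun.scaleR_left)
  have cf: "continuous_on {lo<..<hi} f"
    using f' by (meson DERIV_isCont continuous_at_imp_continuous_on)
  have "((\<lambda>x. integral (cbox 0 (pi/2)) (g x)) has_derivative integral (cbox 0 (pi/2)) (G (s, r)))
      (at (s, r) within U)"
  proof (rule leibniz_rule)
    fix x \<theta> assume "x \<in> U"
    then have "snd x + (fst x - snd x) * (sin \<theta>)\<^sup>2 \<in> {lo<..<hi}"
      using sin2_combination_in_interval[of "snd x" lo hi "fst x" \<theta>] by (auto simp: U_def mem_Times_iff)
    then show "((\<lambda>x. g x \<theta>) has_derivative blinfun_apply (G x \<theta>)) (at x within U)"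
      unfolding g_def G_def blinfun_G by (intro sin2_integrand_has_derivative f')
  next
    fix x assume "x \<in> U"
    then show "g x integrable_on cbox 0 (pi/2)"
      using sin2_integral_has_integral[OF cf w, of "snd x" "fst x"]
      unfolding g_def[abs_def] cbox_interval
      by (auto simp: U_def mem_Times_iff intro: has_integral_integrable)
  next
    have "continuous_on (U \<times> UNIV) (\<lambda>(x, \<theta>). f' (snd x + (fst x - snd x) * (sin \<theta>)\<^sup>2) * ((sin \<theta>)\<^sup>2 * w \<theta>))"
      and "continuous_on (U \<times> UNIV) (\<lambda>(x, \<theta>). f' (snd x + (fst x - snd x) * (sin \<theta>)\<^sup>2) * ((cos \<theta>)\<^sup>2 * w \<theta>))"
      unfolding U_def by (intro continuous_on_sin2_integrand_param cf' continuous_intros w)+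
    note c = this[unfolded split_beta, THEN continuous_on_subset]
    show "continuous_on (U \<times> cbox 0 (pi/2)) (\<lambda>(x, \<theta>). G x \<theta>)"
      unfolding G_def split_beta
      by (intro continuous_on_add continuous_on_scaleR continuous_on_const c) auto
  qed (use s r in \<open>auto simp: U_def intro: convex_Times\<close>)
  moreover have "integral (cbox 0 (pi/2)) (G (s, r)) =
      sin2_integral f' (\<lambda>\<theta>. (sin \<theta>)\<^sup>2 * w \<theta>) s r *\<^sub>R fst_blinfun
        + sin2_integral f' (\<lambda>\<theta>. (cos \<theta>)\<^sup>2 * w \<theta>) s r *\<^sub>R snd_blinfun"
    unfolding G_def fst_conv snd_conv cbox_interval
    by (intro integral_unique has_integral_add has_integral_scaleR_left
        sin2_integral_has_integral[OF cf'] r s continuous_intros w)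
  moreover have "at (s, r) within U = at (s, r)"
    using s r by (intro at_within_open) (auto simp: U_def intro: open_Times)
  ultimately show ?thesis
    unfolding sin2_integral_def g_def[abs_def] cbox_interval by (simp add: blinfun_G)
qed

lemma sin2_integral_pos:
  assumes f: "continuous_on {lo<..<hi} f" and f_pos: "\<And>\<eta>. \<eta> \<in> {lo<..<hi} \<Longrightarrow> f \<eta> > 0"
    and w: "continuous_on UNIV w" and w_nonneg: "\<And>\<theta>. w \<theta> \<ge> 0"
    and w_int: "(w has_integral c) {0..pi/2}" and c: "c > 0"
    and r: "r \<in> {lo<..<hi}" and s: "s \<in> {lo<..<hi}" and rs: "r \<le> s"
  shows "sin2_integral f w s r > 0"
proof -
  have sub: "{r..s} \<subseteq> {lo<..<hi}" using r s by auto
  obtain \<eta>0 where \<eta>0: "\<eta>0 \<in> {r..s}" "\<And>\<eta>. \<eta> \<in> {r..s} \<Longrightarrow> f \<eta>0 \<le> f \<eta>"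
    using continuous_attains_inf[OF compact_Icc _ continuous_on_subset[OF f sub]] rs by auto
  have "f \<eta>0 * w \<theta> \<le> f (r + (s - r) * (sin \<theta>)\<^sup>2) * w \<theta>" for \<theta>
    using \<eta>0(2) sin2_combination_between[of r s \<theta>] rs w_nonneg by (intro mult_right_mono) auto
  then have "f \<eta>0 * c \<le> sin2_integral f w s r"
    by (intro has_integral_le[OF has_integral_mult_right[OF w_int] sin2_integral_has_integral[OF f w r s]])
  moreover have "f \<eta>0 > 0" using f_pos \<eta>0(1) sub by auto
  ultimately show ?thesis using c by (meson mult_pos_pos less_le_trans)
qed

lemma sin_squared_has_integral: "((\<lambda>\<theta>. (sin \<theta>)\<^sup>2 * 2) has_integral pi/2) {0..pi/2}"
proof -
  have "((\<lambda>\<theta>. (sin \<theta>)\<^sup>2 * 2) has_integral ((pi/2 - sin (pi/2) * cos (pi/2)) - (0 - sin 0 * cos 0))) {0..pi/2}"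
    by (rule fundamental_theorem_of_calculus)
      (auto intro!: derivative_eq_intros simp: has_real_derivative_iff_has_vector_derivative[symmetric]
        power2_eq_square cos_squared_eq[unfolded power2_eq_square] algebra_simps)
  then show ?thesis by simp
qed

lemma cos_squared_has_integral: "((\<lambda>\<theta>. (cos \<theta>)\<^sup>2 * 2) has_integral pi/2) {0..pi/2}"
proof -
  have "((\<lambda>\<theta>. (cos \<theta>)\<^sup>2 * 2) has_integral ((pi/2 + sin (pi/2) * cos (pi/2)) - (0 + sin 0 * cos 0))) {0..pi/2}"
    by (rule fundamental_theorem_of_calculus)
      (auto intro!: derivative_eq_intros simp: has_real_derivative_iff_has_vector_derivative[symmetric]
        power2_eq_square sin_squared_eq[unfolded power2_eq_square] algebra_simps)
  then show ?thesis by simp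
qed

lemma sin2_integral_euler_poisson_darboux:
  assumes f': "\<And>\<eta>. \<eta> \<in> {lo<..<hi} \<Longrightarrow> (f has_real_derivative f' \<eta>) (at \<eta>)"
    and cf': "continuous_on {lo<..<hi} f'"
    and r: "r \<in> {lo<..<hi}" and s: "s \<in> {lo<..<hi::real}"
  shows "2 * (s - r) * sin2_integral f' (\<lambda>\<theta>. (sin \<theta>)\<^sup>2 * (cos \<theta>)\<^sup>2 * 2) s r
       = sin2_integral f (\<lambda>\<theta>. (sin \<theta>)\<^sup>2 * 2) s r - sin2_integral f (\<lambda>\<theta>. (cos \<theta>)\<^sup>2 * 2) s r"
proof -
  define \<eta> where "\<eta> \<theta> = r + (s - r) * (sin \<theta>)\<^sup>2" for \<theta>
  \<comment> \<open>\<open>\<phi>\<close> vanishes at \<open>0\<close> and \<open>pi/2\<close>, and \<open>\<phi>'\<close> integrates to half the difference of the two sides\<close>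
  define \<phi> where "\<phi> \<theta> = f (\<eta> \<theta>) * (sin \<theta> * cos \<theta>)" for \<theta>
  define \<phi>' where "\<phi>' \<theta> = (s - r) * (f' (\<eta> \<theta>) * ((sin \<theta>)\<^sup>2 * (cos \<theta>)\<^sup>2 * 2))
      + (1/2) * (f (\<eta> \<theta>) * ((cos \<theta>)\<^sup>2 * 2)) - (1/2) * (f (\<eta> \<theta>) * ((sin \<theta>)\<^sup>2 * 2))" for \<theta>
  have \<eta>_in: "\<eta> \<theta> \<in> {lo<..<hi}" for \<theta>
    unfolding \<eta>_def by (rule sin2_combination_in_interval[OF r s])
  have cf: "continuous_on {lo<..<hi} f"
    using f' by (meson DERIV_isCont continuous_at_imp_continuous_on)
  have "(\<phi> has_real_derivative \<phi>' \<theta>) (at \<theta>)" for \<theta>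
  proof -
    have "(\<eta> has_real_derivative (s - r) * (2 * sin \<theta> * cos \<theta>)) (at \<theta>)"
      unfolding \<eta>_def[abs_def] by (auto intro!: derivative_eq_intros simp: power2_eq_square)
    from DERIV_chain2[OF f'[OF \<eta>_in] this]
    have "((\<lambda>\<theta>. f (\<eta> \<theta>)) has_real_derivative f' (\<eta> \<theta>) * ((s - r) * (2 * sin \<theta> * cos \<theta>))) (at \<theta>)" .
    moreover have "((\<lambda>\<theta>. sin \<theta> * cos \<theta>) has_real_derivative cos \<theta> * cos \<theta> - sin \<theta> * sin \<theta>) (at \<theta>)"
      by (auto intro!: derivative_eq_intros simp: algebra_simps)
    ultimately show ?thesis
      unfolding \<phi>_def[abs_def] \<phi>'_def
      by (rule DERIV_mult[THEN DERIV_cong]) (simp add: power2_eq_square algebra_simps)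
  qed
  then have "(\<phi>' has_integral \<phi> (pi/2) - \<phi> 0) {0..pi/2}"
    by (intro fundamental_theorem_of_calculus) (auto simp: has_real_derivative_iff_has_vector_derivative[symmetric]
        intro: has_field_derivative_at_within)
  then have "(\<phi>' has_integral 0) {0..pi/2}"
    by (simp add: \<phi>_def)
  moreover have "(\<phi>' has_integral (s - r) * sin2_integral f' (\<lambda>\<theta>. (sin \<theta>)\<^sup>2 * (cos \<theta>)\<^sup>2 * 2) s r
      + (1/2) * sin2_integral f (\<lambda>\<theta>. (cos \<theta>)\<^sup>2 * 2) s r - (1/2) * sin2_integral f (\<lambda>\<theta>. (sin \<theta>)\<^sup>2 * 2) s r) {0..pi/2}"
  proof -
    have "continuous_on UNIV (\<lambda>\<theta>. (sin \<theta>)\<^sup>2 * (cos \<theta>)\<^sup>2 * 2 :: real)"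
      "continuous_on UNIV (\<lambda>\<theta>. (sin \<theta>)\<^sup>2 * 2 :: real)" "continuous_on UNIV (\<lambda>\<theta>. (cos \<theta>)\<^sup>2 * 2 :: real)"
      by (intro continuous_intros)+
    note I = this[THEN sin2_integral_has_integral[OF cf' _ r s]] this[THEN sin2_integral_has_integral[OF cf _ r s]]
    show ?thesis
      unfolding \<phi>'_def[abs_def] \<eta>_def
      by (intro has_integral_diff has_integral_add has_integral_mult_right I)
  qed
  ultimately have "0 = (s - r) * sin2_integral f' (\<lambda>\<theta>. (sin \<theta>)\<^sup>2 * (cos \<theta>)\<^sup>2 * 2) s r
      + (1/2) * sin2_integral f (\<lambda>\<theta>. (cos \<theta>)\<^sup>2 * 2) s r - (1/2) * sin2_integral f (\<lambda>\<theta>. (sin \<theta>)\<^sup>2 * 2) s r"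
    by (rule has_integral_unique)
  then show ?thesis by (simp add: algebra_simps)
qed

lemma arcsin_sqrt_affine_bounds:
  assumes "r < s" "\<eta> \<in> {r..s}"
  shows "-1 \<le> sqrt ((\<eta> - r) / (s - r))" "sqrt ((\<eta> - r) / (s - r)) \<le> 1"
    and "arcsin (sqrt ((\<eta> - r) / (s - r))) \<in> {0..pi/2}"
    and "r + (s - r) * (sin (arcsin (sqrt ((\<eta> - r) / (s - r)))))\<^sup>2 = \<eta>"
proof -
  have q: "0 \<le> sqrt ((\<eta> - r) / (s - r))" "sqrt ((\<eta> - r) / (s - r)) \<le> 1"
    using assms by auto
  show m: "-1 \<le> sqrt ((\<eta> - r) / (s - r))" "sqrt ((\<eta> - r) / (s - r)) \<le> 1"
    using q by linarith+
  show "arcsin (sqrt ((\<eta> - r) / (s - r))) \<in> {0..pi/2}"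
    using arcsin_le_arcsin[OF m order_refl] arcsin_nonneg q by auto
  have "(sin (arcsin (sqrt ((\<eta> - r) / (s - r)))))\<^sup>2 = (\<eta> - r) / (s - r)"
    using sin_arcsin[OF m] assms by simp
  then show "r + (s - r) * (sin (arcsin (sqrt ((\<eta> - r) / (s - r)))))\<^sup>2 = \<eta>"
    using assms by simp
qed

lemma arcsin_sqrt_affine_has_derivative:
  assumes "r < \<eta>" "\<eta> < s"
  shows "((\<lambda>x. arcsin (sqrt ((x - r) / (s - r)))) has_real_derivative
    1 / (2 * sqrt ((s - \<eta>) * (\<eta> - r)))) (at \<eta>)"
proof -
  have q: "0 < (\<eta> - r) / (s - r)" "(\<eta> - r) / (s - r) < 1" using assms by (auto simp: field_simps)
  then have sq: "-1 < sqrt ((\<eta> - r) / (s - r))" "sqrt ((\<eta> - r) / (s - r)) < 1"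
    by (auto intro: less_trans[of _ 0])
  have "((\<lambda>x. (x - r) / (s - r)) has_real_derivative 1 / (s - r)) (at \<eta>)"
    using assms by (auto intro!: derivative_eq_intros)
  from DERIV_chain2[OF DERIV_real_sqrt[OF q(1)] this]
  have "((\<lambda>x. sqrt ((x - r) / (s - r))) has_real_derivative
      inverse (sqrt ((\<eta> - r) / (s - r))) / 2 * (1 / (s - r))) (at \<eta>)" .
  from DERIV_chain2[OF DERIV_arcsin[OF sq] this]
  have "((\<lambda>x. arcsin (sqrt ((x - r) / (s - r)))) has_real_derivative
      inverse (sqrt (1 - (sqrt ((\<eta> - r) / (s - r)))\<^sup>2))
        * (inverse (sqrt ((\<eta> - r) / (s - r))) / 2 * (1 / (s - r)))) (at \<eta>)" .
  moreover have "inverse (sqrt (1 - (sqrt ((\<eta> - r) / (s - r)))\<^sup>2))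
        * (inverse (sqrt ((\<eta> - r) / (s - r))) / 2 * (1 / (s - r)))
      = 1 / (2 * sqrt ((s - \<eta>) * (\<eta> - r)))"
  proof -
    define Q where "Q = (\<eta> - r) / (s - r)"
    have "(1 - Q) * Q = (s - \<eta>) * (\<eta> - r) / (s - r)\<^sup>2"
      using assms by (simp add: Q_def field_simps power2_eq_square)
    then have "sqrt ((s - \<eta>) * (\<eta> - r)) = sqrt (1 - Q) * sqrt Q * (s - r)"
      using assms by (simp add: real_sqrt_mult[symmetric] real_sqrt_divide)
    moreover have "sqrt Q > 0" "sqrt (1 - Q) > 0" using q by (simp_all add: Q_def)
    ultimately show ?thesis
      using assms by (simp add: Q_def[symmetric] field_simps)
  qed
  ultimately show ?thesis by simp
qed

lemma sin2_substitution:
  assumes rs: "r < s" and g: "continuous_on {r..s} g"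
  shows "((\<lambda>\<eta>. g \<eta> / sqrt ((s - \<eta>) * (\<eta> - r))) has_integral sin2_integral g (\<lambda>_. 2) s r) {r..s}"
proof -
  define \<theta> where "\<theta> \<eta> = arcsin (sqrt ((\<eta> - r) / (s - r)))" for \<eta>
  define \<theta>' where "\<theta>' \<eta> = 1 / (2 * sqrt ((s - \<eta>) * (\<eta> - r)))" for \<eta>
  define h where "h t = g (r + (s - r) * (sin t)\<^sup>2) * 2" for t
  note bounds = arcsin_sqrt_affine_bounds[OF rs]
  have \<theta>_range: "\<theta> ` {r..s} \<subseteq> {0..pi/2}"
    using bounds(3) by (auto simp: \<theta>_def)
  have \<theta>_cont: "continuous_on {r..s} \<theta>"
    unfolding \<theta>_def using rs bounds(1,2) by (auto intro!: continuous_intros)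
  have \<theta>_deriv: "(\<theta> has_real_derivative \<theta>' \<eta>) (at \<eta> within {r..s})" if "\<eta> \<in> {r..s} - {r, s}" for \<eta>
    using arcsin_sqrt_affine_has_derivative[of r \<eta> s] that
    by (auto simp: \<theta>_def[abs_def] \<theta>'_def intro: has_field_derivative_at_within)
  have "continuous_on UNIV (\<lambda>t. g (r + (s - r) * (sin t)\<^sup>2))"
    by (rule continuous_on_compose2[OF g])
      (use sin2_combination_between[of r s] rs in \<open>auto intro!: continuous_intros\<close>)
  then have h_cont: "continuous_on {0..pi/2} h"
    unfolding h_def by (auto intro!: continuous_intros elim: continuous_on_subset)
  from has_integral_substitution_general[where s="{r, s}", OF _ less_imp_le[OF rs] \<theta>_range h_cont \<theta>_cont \<theta>_deriv]
  have "((\<lambda>\<eta>. \<theta>' \<eta> *\<^sub>R h (\<theta> \<eta>)) has_integral integral {0..pi/2} h) {r..s}"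
    using rs by (simp add: \<theta>_def)
  \<comment> \<open>also at \<open>\<eta> = r, s\<close>, where both sides are \<open>0\<close> since \<open>x / 0 = 0\<close>\<close>
  moreover have "\<theta>' \<eta> *\<^sub>R h (\<theta> \<eta>) = g \<eta> / sqrt ((s - \<eta>) * (\<eta> - r))" if "\<eta> \<in> {r..s}" for \<eta>
    using bounds(4)[OF that] by (simp add: \<theta>_def \<theta>'_def h_def)
  ultimately have "((\<lambda>\<eta>. g \<eta> / sqrt ((s - \<eta>) * (\<eta> - r))) has_integral integral {0..pi/2} h) {r..s}"
    by (rule has_integral_eq[rotated])
  then show ?thesis
    unfolding sin2_integral_def h_def[abs_def] .
qed

(* The integrand of I with u1 = a is wkernel eta / sqrt ((u2 - eta) (eta - u3)). *)
definition wkernel :: "real \<Rightarrow> real \<Rightarrow> real \<Rightarrow> real" where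
  "wkernel \<nu> a \<eta> = sqrt (\<eta> + \<nu>) / sqrt (a - \<eta>)"

definition wkernel' :: "real \<Rightarrow> real \<Rightarrow> real \<Rightarrow> real" where
  "wkernel' \<nu> a \<eta> = wkernel \<nu> a \<eta> * (a + \<nu>) / (2 * (\<eta> + \<nu>) * (a - \<eta>))"

definition wkernel'' :: "real \<Rightarrow> real \<Rightarrow> real \<Rightarrow> real" where
  "wkernel'' \<nu> a \<eta> = wkernel' \<nu> a \<eta> * (3 * (\<eta> + \<nu>) - (a - \<eta>)) / (2 * (\<eta> + \<nu>) * (a - \<eta>))"

lemma wkernel_has_derivative:
  assumes "-\<nu> < \<eta>" "\<eta> < a"
  shows "(wkernel \<nu> a has_real_derivative wkernel' \<nu> a \<eta>) (at \<eta>)"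
proof -
  define P Q where "P = sqrt (\<eta> + \<nu>)" and "Q = sqrt (a - \<eta>)"
  have PQ: "P > 0" "Q > 0" "\<eta> + \<nu> = P * P" "a - \<eta> = Q * Q" "a + \<nu> = P * P + Q * Q"
    using assms by (auto simp: P_def Q_def)
  have "((\<lambda>x. sqrt (x + \<nu>)) has_real_derivative inverse P / 2) (at \<eta>)"
    and "((\<lambda>x. sqrt (a - x)) has_real_derivative - inverse Q / 2) (at \<eta>)"
    using assms by (auto intro!: derivative_eq_intros simp: P_def Q_def)
  from DERIV_divide[OF this] PQ(2)
  have "(wkernel \<nu> a has_real_derivative (inverse P / 2 * Q - P * (- inverse Q / 2)) / (Q * Q)) (at \<eta>)"
    unfolding wkernel_def[abs_def] P_def Q_def by simp
  moreover have "(inverse P / 2 * Q - P * (- inverse Q / 2)) / (Q * Q) = wkernel' \<nu> a \<eta>"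
    unfolding wkernel'_def wkernel_def P_def[symmetric] Q_def[symmetric] PQ(3-5)
    using PQ(1,2) by (simp add: field_simps)
  ultimately show ?thesis by simp
qed

lemma wkernel'_has_derivative:
  assumes "-\<nu> < \<eta>" "\<eta> < a"
  shows "(wkernel' \<nu> a has_real_derivative wkernel'' \<nu> a \<eta>) (at \<eta>)"
proof -
  have key: "(W * c / (2 * p * q) * c * (2 * p * q) - W * c * (2 * q - 2 * p))
      / ((2 * p * q) * (2 * p * q)) = W * c / (2 * p * q) * (3 * p - q) / (2 * p * q)"
    if "p > 0" "q > 0" "c = p + q" for W c p q :: real
    using that by (simp add: field_simps)
  have "((\<lambda>x. wkernel \<nu> a x * (a + \<nu>)) has_real_derivative wkernel' \<nu> a \<eta> * (a + \<nu>)) (at \<eta>)"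
    and "((\<lambda>x. 2 * (x + \<nu>) * (a - x)) has_real_derivative 2 * (a - \<eta>) - 2 * (\<eta> + \<nu>)) (at \<eta>)"
    using assms by (auto intro!: derivative_eq_intros wkernel_has_derivative simp: algebra_simps)
  moreover have "2 * (\<eta> + \<nu>) * (a - \<eta>) \<noteq> 0" using assms by simp
  ultimately have "(wkernel' \<nu> a has_real_derivative (wkernel' \<nu> a \<eta> * (a + \<nu>) * (2 * (\<eta> + \<nu>) * (a - \<eta>))
      - wkernel \<nu> a \<eta> * (a + \<nu>) * (2 * (a - \<eta>) - 2 * (\<eta> + \<nu>)))
      / ((2 * (\<eta> + \<nu>) * (a - \<eta>)) * (2 * (\<eta> + \<nu>) * (a - \<eta>)))) (at \<eta>)"
    unfolding wkernel'_def[abs_def] by (rule DERIV_divide)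
  moreover have "(wkernel' \<nu> a \<eta> * (a + \<nu>) * (2 * (\<eta> + \<nu>) * (a - \<eta>))
      - wkernel \<nu> a \<eta> * (a + \<nu>) * (2 * (a - \<eta>) - 2 * (\<eta> + \<nu>)))
      / ((2 * (\<eta> + \<nu>) * (a - \<eta>)) * (2 * (\<eta> + \<nu>) * (a - \<eta>))) = wkernel'' \<nu> a \<eta>"
    unfolding wkernel''_def wkernel'_def by (rule key) (use assms in auto)
  ultimately show ?thesis by simp
qed

lemma continuous_on_wkernel: "continuous_on {-\<nu><..<a} (wkernel \<nu> a)"
  unfolding wkernel_def by (intro continuous_intros) auto

lemma continuous_on_wkernel': "continuous_on {-\<nu><..<a} (wkernel' \<nu> a)"
  unfolding wkernel'_def by (intro continuous_intros continuous_on_wkernel) auto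

lemma continuous_on_wkernel'': "continuous_on {-\<nu><..<a} (wkernel'' \<nu> a)"
  unfolding wkernel''_def by (intro continuous_intros continuous_on_wkernel') auto

lemma wkernel_pos: "-\<nu> < \<eta> \<Longrightarrow> \<eta> < a \<Longrightarrow> wkernel \<nu> a \<eta> > 0"
  and wkernel'_pos: "-\<nu> < \<eta> \<Longrightarrow> \<eta> < a \<Longrightarrow> wkernel' \<nu> a \<eta> > 0"
  by (simp_all add: wkernel_def wkernel'_def)

lemma WI_eq_sin2_integral:
  assumes "-\<nu> < r" "r < s" "s < a"
  shows "WI \<nu> a s r = sin2_integral (wkernel \<nu> a) (\<lambda>_. 2) s r"
proof -
  have eq: "wkernel \<nu> a \<eta> / sqrt ((s - \<eta>) * (\<eta> - r))
      = (\<eta> + \<nu>) / sqrt ((\<eta> + \<nu>) * (a - \<eta>) * (s - \<eta>) * (\<eta> - r))" if "\<eta> \<in> {r..s}" for \<eta>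
  proof -
    have P: "sqrt (\<eta> + \<nu>) \<noteq> 0" "\<eta> + \<nu> = sqrt (\<eta> + \<nu>) * sqrt (\<eta> + \<nu>)"
      using that assms by auto
    have "sqrt ((\<eta> + \<nu>) * (a - \<eta>) * (s - \<eta>) * (\<eta> - r))
        = sqrt (\<eta> + \<nu>) * sqrt (a - \<eta>) * sqrt ((s - \<eta>) * (\<eta> - r))"
      by (simp add: real_sqrt_mult mult.assoc)
    moreover have "X * X / (X * Y * Z) = X / Y / Z" if "X \<noteq> 0" for X Y Z :: real
      using that by (simp add: divide_divide_eq_left mult.assoc)
    ultimately show ?thesis
      unfolding wkernel_def using P by metis
  qed
  have "continuous_on {r..s} (wkernel \<nu> a)"
    using assms by (intro continuous_on_subset[OF continuous_on_wkernel]) auto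
  then show ?thesis
    unfolding WI_def by (intro integral_unique has_integral_eq[OF eq sin2_substitution[OF assms(2)]])
qed

lemma has_derivative_from_ordered_region:
  fixes \<nu> a :: real
  assumes g: "(g has_derivative D) (at (s, r))" and "-\<nu> < r" "r < s" "s < a"
    and eq: "\<And>s' r'. -\<nu> < r' \<Longrightarrow> r' < s' \<Longrightarrow> s' < a \<Longrightarrow> f s' r' = g (s', r')"
  shows "((\<lambda>x. f (fst x) (snd x)) has_derivative D) (at (s, r))"
proof (rule has_derivative_transform_within_open[OF g])
  show "open {x :: real \<times> real. -\<nu> < snd x \<and> snd x < fst x \<and> fst x < a}"
    by (intro open_Collect_conj open_Collect_less continuous_intros)
qed (use assms in auto)

(* The mixed partial derivative of I in u2 and u3, see dWI2_has_derivative. *)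
definition ddWI23 :: "real \<Rightarrow> real \<Rightarrow> real \<Rightarrow> real \<Rightarrow> real" where
  "ddWI23 \<nu> a s r = sin2_integral (wkernel'' \<nu> a) (\<lambda>\<theta>. (sin \<theta>)\<^sup>2 * (cos \<theta>)\<^sup>2 * 2) s r"

lemma sin2_integral_wkernel_has_derivative:
  assumes "-\<nu> < r" "r < s" "s < a" and w: "continuous_on UNIV w"
  shows "((\<lambda>x. sin2_integral (wkernel \<nu> a) w (fst x) (snd x)) has_derivative
    (\<lambda>h. sin2_integral (wkernel' \<nu> a) (\<lambda>\<theta>. (sin \<theta>)\<^sup>2 * w \<theta>) s r * fst h
       + sin2_integral (wkernel' \<nu> a) (\<lambda>\<theta>. (cos \<theta>)\<^sup>2 * w \<theta>) s r * snd h)) (at (s, r))"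
    (is ?A)
  and "((\<lambda>x. sin2_integral (wkernel' \<nu> a) w (fst x) (snd x)) has_derivative
    (\<lambda>h. sin2_integral (wkernel'' \<nu> a) (\<lambda>\<theta>. (sin \<theta>)\<^sup>2 * w \<theta>) s r * fst h
       + sin2_integral (wkernel'' \<nu> a) (\<lambda>\<theta>. (cos \<theta>)\<^sup>2 * w \<theta>) s r * snd h)) (at (s, r))"
    (is ?B)
proof -
  have s: "s \<in> {-\<nu><..<a}" and r: "r \<in> {-\<nu><..<a}" using assms by auto
  show ?A by (rule sin2_integral_has_derivative[OF _ continuous_on_wkernel' w s r]) (auto intro: wkernel_has_derivative)
  show ?B by (rule sin2_integral_has_derivative[OF _ continuous_on_wkernel'' w s r]) (auto intro: wkernel'_has_derivative)
qed

lemma WI_has_derivative_sin2: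
  assumes "-\<nu> < r" "r < s" "s < a"
  shows "((\<lambda>x. WI \<nu> a (fst x) (snd x)) has_derivative
    (\<lambda>h. sin2_integral (wkernel' \<nu> a) (\<lambda>\<theta>. (sin \<theta>)\<^sup>2 * 2) s r * fst h
       + sin2_integral (wkernel' \<nu> a) (\<lambda>\<theta>. (cos \<theta>)\<^sup>2 * 2) s r * snd h)) (at (s, r))"
  using sin2_integral_wkernel_has_derivative(1)[OF assms continuous_on_const]
  by (rule has_derivative_from_ordered_region) (use assms WI_eq_sin2_integral in auto)

lemma dWI2_eq_sin2_integral:
  assumes "-\<nu> < r" "r < s" "s < a"
  shows "dWI2 \<nu> a s r = sin2_integral (wkernel' \<nu> a) (\<lambda>\<theta>. (sin \<theta>)\<^sup>2 * 2) s r"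
  unfolding dWI2_def
  by (rule DERIV_imp_deriv) (use has_derivative_partial_fst[OF WI_has_derivative_sin2[OF assms]] in simp)

lemma dWI3_eq_sin2_integral:
  assumes "-\<nu> < r" "r < s" "s < a"
  shows "dWI3 \<nu> a s r = sin2_integral (wkernel' \<nu> a) (\<lambda>\<theta>. (cos \<theta>)\<^sup>2 * 2) s r"
  unfolding dWI3_def
  by (rule DERIV_imp_deriv) (use has_derivative_partial_snd[OF WI_has_derivative_sin2[OF assms]] in simp)

lemma WI_has_derivative:
  assumes "-\<nu> < r" "r < s" "s < a"
  shows "((\<lambda>x. WI \<nu> a (fst x) (snd x)) has_derivative
    (\<lambda>h. dWI2 \<nu> a s r * fst h + dWI3 \<nu> a s r * snd h)) (at (s, r))"
  using WI_has_derivative_sin2[OF assms] by (simp add: dWI2_eq_sin2_integral[OF assms] dWI3_eq_sin2_integral[OF assms])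

lemma dWI2_has_derivative:
  assumes "-\<nu> < r" "r < s" "s < a"
  shows "((\<lambda>x. dWI2 \<nu> a (fst x) (snd x)) has_derivative
    (\<lambda>h. sin2_integral (wkernel'' \<nu> a) (\<lambda>\<theta>. (sin \<theta>)\<^sup>2 * ((sin \<theta>)\<^sup>2 * 2)) s r * fst h
       + ddWI23 \<nu> a s r * snd h)) (at (s, r))"
proof -
  have "continuous_on UNIV (\<lambda>\<theta>. (sin \<theta>)\<^sup>2 * 2 :: real)" by (intro continuous_intros)
  note D = sin2_integral_wkernel_has_derivative(2)[OF assms this]
  have "(\<lambda>\<theta>. (cos \<theta>)\<^sup>2 * ((sin \<theta>)\<^sup>2 * 2)) = (\<lambda>\<theta>. (sin \<theta>)\<^sup>2 * (cos \<theta>)\<^sup>2 * 2 :: real)"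
    by (simp add: fun_eq_iff mult_ac)
  note D = D[unfolded this]
  show ?thesis
    unfolding ddWI23_def
    by (rule has_derivative_from_ordered_region[where f="dWI2 \<nu> a", OF D assms]) (simp add: dWI2_eq_sin2_integral)
qed

lemma dWI3_has_derivative:
  assumes "-\<nu> < r" "r < s" "s < a"
  shows "((\<lambda>x. dWI3 \<nu> a (fst x) (snd x)) has_derivative
    (\<lambda>h. ddWI23 \<nu> a s r * fst h
       + sin2_integral (wkernel'' \<nu> a) (\<lambda>\<theta>. (cos \<theta>)\<^sup>2 * ((cos \<theta>)\<^sup>2 * 2)) s r * snd h)) (at (s, r))"
proof -
  have "continuous_on UNIV (\<lambda>\<theta>. (cos \<theta>)\<^sup>2 * 2 :: real)" by (intro continuous_intros)
  note D = sin2_integral_wkernel_has_derivative(2)[OF assms this]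
  have "(\<lambda>\<theta>. (sin \<theta>)\<^sup>2 * ((cos \<theta>)\<^sup>2 * 2)) = (\<lambda>\<theta>. (sin \<theta>)\<^sup>2 * (cos \<theta>)\<^sup>2 * 2 :: real)"
    by (simp add: fun_eq_iff mult_ac)
  note D = D[unfolded this]
  show ?thesis
    unfolding ddWI23_def
    by (rule has_derivative_from_ordered_region[where f="dWI3 \<nu> a", OF D assms]) (simp add: dWI3_eq_sin2_integral)
qed

lemma
  assumes "-\<nu> < r" "r < s" "s < a"
  shows WI_pos: "WI \<nu> a s r > 0"
    and dWI2_pos: "dWI2 \<nu> a s r > 0"
    and dWI3_pos: "dWI3 \<nu> a s r > 0"
proof -
  have r: "r \<in> {-\<nu><..<a}" and s: "s \<in> {-\<nu><..<a}" using assms by auto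
  have const: "((\<lambda>_. 2) has_integral pi) {0..pi/2}"
    using has_integral_const_real[of "2::real" 0 "pi/2"] by simp
  show "WI \<nu> a s r > 0"
    unfolding WI_eq_sin2_integral[OF assms]
    by (rule sin2_integral_pos[OF continuous_on_wkernel _ _ _ const _ r s]) (use assms in \<open>auto intro: wkernel_pos\<close>)
  show "dWI2 \<nu> a s r > 0"
    unfolding dWI2_eq_sin2_integral[OF assms]
    by (rule sin2_integral_pos[OF continuous_on_wkernel' _ _ _ sin_squared_has_integral _ r s])
      (use assms in \<open>auto intro: wkernel'_pos intro!: continuous_intros\<close>)
  show "dWI3 \<nu> a s r > 0"
    unfolding dWI3_eq_sin2_integral[OF assms]
    by (rule sin2_integral_pos[OF continuous_on_wkernel' _ _ _ cos_squared_has_integral _ r s])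
      (use assms in \<open>auto intro: wkernel'_pos intro!: continuous_intros\<close>)
qed

lemma WI_euler_poisson_darboux:
  assumes "-\<nu> < r" "r < s" "s < a"
  shows "2 * (s - r) * ddWI23 \<nu> a s r = dWI2 \<nu> a s r - dWI3 \<nu> a s r"
  unfolding ddWI23_def dWI2_eq_sin2_integral[OF assms] dWI3_eq_sin2_integral[OF assms]
  by (rule sin2_integral_euler_poisson_darboux[OF _ continuous_on_wkernel''])
    (use assms in \<open>auto intro: wkernel'_has_derivative\<close>)

lemma lam2_has_derivative:
  assumes "-\<nu> < r" "r < s" "s < a"
  obtains \<alpha> where "((\<lambda>x. lam2 \<nu> a (fst x) (snd x)) has_derivative (\<lambda>h. \<alpha> * fst h
    + (1 - dWI3 \<nu> a s r / dWI2 \<nu> a s r + WI \<nu> a s r * ddWI23 \<nu> a s r / (dWI2 \<nu> a s r)\<^sup>2) * snd h)) (at (s, r))"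
proof -
  have eq: "(\<lambda>x. lam2 \<nu> a (fst x) (snd x)) =
      (\<lambda>y. (a + 2 * \<nu>) + fst y + snd y - WI \<nu> a (fst y) (snd y) / dWI2 \<nu> a (fst y) (snd y))"
    by (simp add: fun_eq_iff lam2_def algebra_simps)
  have "dWI2 \<nu> a (fst (s, r)) (snd (s, r)) \<noteq> 0"
    using dWI2_pos[OF assms] by simp
  from has_derivative_coordinate_sum_minus_quotient[OF WI_has_derivative[OF assms]
      dWI2_has_derivative[OF assms] this, of "a + 2 * \<nu>"]
  show ?thesis
    unfolding fst_conv snd_conv eq[symmetric] by (rule that)
qed

lemma lam3_has_derivative:
  assumes "-\<nu> < r" "r < s" "s < a"
  obtains \<beta> where "((\<lambda>x. lam3 \<nu> a (fst x) (snd x)) has_derivative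
    (\<lambda>h. (1 - dWI2 \<nu> a s r / dWI3 \<nu> a s r + WI \<nu> a s r * ddWI23 \<nu> a s r / (dWI3 \<nu> a s r)\<^sup>2) * fst h
      + \<beta> * snd h)) (at (s, r))"
proof -
  have eq: "(\<lambda>x. lam3 \<nu> a (fst x) (snd x)) =
      (\<lambda>y. (a + 2 * \<nu>) + fst y + snd y - WI \<nu> a (fst y) (snd y) / dWI3 \<nu> a (fst y) (snd y))"
    by (simp add: fun_eq_iff lam3_def algebra_simps)
  have "dWI3 \<nu> a (fst (s, r)) (snd (s, r)) \<noteq> 0"
    using dWI3_pos[OF assms] by simp
  from has_derivative_coordinate_sum_minus_quotient[OF WI_has_derivative[OF assms]
      dWI3_has_derivative[OF assms] this, of "a + 2 * \<nu>"]
  show ?thesis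
    unfolding fst_conv snd_conv eq[symmetric] by (rule that)
qed

lemma lam2_eq_lam3_iff:
  assumes "-\<nu> < r" "r < s" "s < a"
  shows "lam2 \<nu> a s r = lam3 \<nu> a s r \<longleftrightarrow> dWI2 \<nu> a s r = dWI3 \<nu> a s r"
  using WI_pos[OF assms] dWI2_pos[OF assms] dWI3_pos[OF assms]
  by (auto simp: lam2_def lam3_def field_simps)

lemma ddWI23_eq_0_if_dWI2_eq_dWI3:
  assumes "-\<nu> < r" "r < s" "s < a" and "dWI2 \<nu> a s r = dWI3 \<nu> a s r"
  shows "ddWI23 \<nu> a s r = 0"
  using WI_euler_poisson_darboux[OF assms(1-3)] assms by simp

lemma pdx_eq:
  assumes "(u has_derivative D) (at p)"
  shows "pdx u p = D (1, 0)"
  using has_derivative_partial_fst[of u D "fst p" "snd p"] assms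
  by (simp add: pdx_def DERIV_imp_deriv)

lemma pdt_eq:
  assumes "(u has_derivative D) (at p)"
  shows "pdt u p = D (0, 1)"
  using has_derivative_partial_snd[of u D "fst p" "snd p"] assms
  by (simp add: pdt_def DERIV_imp_deriv)

lemma pdx_const [simp]: "pdx (\<lambda>_. c) p = 0" and pdt_const [simp]: "pdt (\<lambda>_. c) p = 0"
  by (simp_all add: pdx_def pdt_def)

lemma transport_from_hodograph:
  fixes u g :: "real \<times> real \<Rightarrow> real"
  assumes "open \<Omega>" "p \<in> \<Omega>"
    and u: "(u has_derivative D) (at p)"
    and g: "(g has_derivative (\<lambda>h. \<alpha> * D h)) (at p)"
    and hodograph: "\<And>q. q \<in> \<Omega> \<Longrightarrow> fst q = g q * snd q"
  shows "pdt u p + g p * pdx u p = 0"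
proof -
  have "((\<lambda>q. g q * snd q) has_derivative (\<lambda>h. g p * snd h + \<alpha> * D h * snd p)) (at p)"
    using has_derivative_mult[OF g has_derivative_snd[OF has_derivative_ident]] by simp
  then have "(fst has_derivative (\<lambda>h. g p * snd h + \<alpha> * D h * snd p)) (at p)"
    by (rule has_derivative_transform_within_open) (use assms hodograph in auto)
  \<comment> \<open>differentiating \<open>x = g(x, t) t\<close> in \<open>x\<close> and in \<open>t\<close>\<close>
  then have fst_eq: "(\<lambda>h. g p * snd h + \<alpha> * D h * snd p) = fst"
    using has_derivative_unique has_derivative_fst[OF has_derivative_ident] by blast
  have e1: "\<alpha> * D (1, 0) * snd p = 1" and e2: "g p + \<alpha> * D (0, 1) * snd p = 0"
    using fun_cong[OF fst_eq, of "(1, 0)"] fun_cong[OF fst_eq, of "(0, 1)"] by simp_all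
  then have "\<alpha> * snd p * (D (0, 1) + g p * D (1, 0)) = 0"
    by (simp add: algebra_simps)
  moreover have "\<alpha> * snd p \<noteq> 0" using e1 by auto
  ultimately show ?thesis
    using pdx_eq[OF u] pdt_eq[OF u] by simp
qed

lemma whitham_coincident_speeds:
  assumes \<Omega>: "open \<Omega>" "\<Omega> \<subseteq> {p. snd p > 0}"
    and diff: "\<And>p. p \<in> \<Omega> \<Longrightarrow> u2 differentiable (at p) \<and> u3 differentiable (at p)"
    and bounds: "\<And>p. p \<in> \<Omega> \<Longrightarrow> -\<nu> < u3 p \<and> u3 p < u2 p \<and> u2 p < a"
    and hodograph2: "\<And>p. p \<in> \<Omega> \<Longrightarrow> fst p = lam2 \<nu> a (u2 p) (u3 p) * snd p"
    and hodograph3: "\<And>p. p \<in> \<Omega> \<Longrightarrow> fst p = lam3 \<nu> a (u2 p) (u3 p) * snd p"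
  shows "whitham \<nu> \<Omega> (\<lambda>_. a) u2 u3"
  unfolding whitham_def
proof (intro ballI conjI)
  fix p assume p: "p \<in> \<Omega>"
  obtain D2 D3 where D2: "(u2 has_derivative D2) (at p)" and D3: "(u3 has_derivative D3) (at p)"
    using diff[OF p] by (auto simp: differentiable_def)
  have r: "-\<nu> < u3 p" "u3 p < u2 p" "u2 p < a" using bounds[OF p] by auto
  have "lam2 \<nu> a (u2 p) (u3 p) = lam3 \<nu> a (u2 p) (u3 p)"
    using hodograph2[OF p] hodograph3[OF p] \<Omega>(2) p by auto
  then have coincide: "dWI2 \<nu> a (u2 p) (u3 p) = dWI3 \<nu> a (u2 p) (u3 p)"
    using lam2_eq_lam3_iff[OF r] by blast
  have pos: "dWI2 \<nu> a (u2 p) (u3 p) > 0" using dWI2_pos[OF r] .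
  have mixed: "ddWI23 \<nu> a (u2 p) (u3 p) = 0"
    using ddWI23_eq_0_if_dWI2_eq_dWI3[OF r coincide] .
  show "pdt (\<lambda>_. a) p + lam1 \<nu> a (u2 p) (u3 p) * pdx (\<lambda>_. a) p = 0"
    by simp
  obtain \<alpha> where "((\<lambda>x. lam2 \<nu> a (fst x) (snd x)) has_derivative (\<lambda>h. \<alpha> * fst h + 0 * snd h)) (at (u2 p, u3 p))"
    using lam2_has_derivative[OF r] coincide mixed pos by auto
  from has_derivative_compose_pair[OF this D2 D3]
  have "((\<lambda>q. lam2 \<nu> a (u2 q) (u3 q)) has_derivative (\<lambda>h. \<alpha> * D2 h)) (at p)" by simp
  from transport_from_hodograph[OF \<Omega>(1) p D2 this hodograph2]
  show "pdt u2 p + lam2 \<nu> a (u2 p) (u3 p) * pdx u2 p = 0" .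
  obtain \<beta> where "((\<lambda>x. lam3 \<nu> a (fst x) (snd x)) has_derivative (\<lambda>h. 0 * fst h + \<beta> * snd h)) (at (u2 p, u3 p))"
    using lam3_has_derivative[OF r] coincide mixed pos by auto
  from has_derivative_compose_pair[OF this D2 D3]
  have "((\<lambda>q. lam3 \<nu> a (u2 q) (u3 q)) has_derivative (\<lambda>h. \<beta> * D3 h)) (at p)" by simp
  from transport_from_hodograph[OF \<Omega>(1) p D3 this hodograph3]
  show "pdt u3 p + lam3 \<nu> a (u2 p) (u3 p) * pdx u3 p = 0" .
qed

lemma whitham_constant_u3:
  assumes \<Omega>: "open \<Omega>"
    and diff: "\<And>p. p \<in> \<Omega> \<Longrightarrow> u2 differentiable (at p)"
    and bounds: "-\<nu> < b" "\<And>p. p \<in> \<Omega> \<Longrightarrow> b < u2 p \<and> u2 p < a"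
    and hodograph: "\<And>p. p \<in> \<Omega> \<Longrightarrow> fst p = lam2 \<nu> a (u2 p) b * snd p"
  shows "whitham \<nu> \<Omega> (\<lambda>_. a) u2 (\<lambda>_. b)"
  unfolding whitham_def
proof (intro ballI conjI)
  fix p assume p: "p \<in> \<Omega>"
  obtain D2 where D2: "(u2 has_derivative D2) (at p)"
    using diff[OF p] by (auto simp: differentiable_def)
  have r: "-\<nu> < b" "b < u2 p" "u2 p < a" using bounds p by auto
  obtain \<alpha> \<beta> where "((\<lambda>x. lam2 \<nu> a (fst x) (snd x)) has_derivative (\<lambda>h. \<alpha> * fst h + \<beta> * snd h)) (at (u2 p, b))"
    using lam2_has_derivative[OF r] by blast
  from has_derivative_compose_pair[OF this D2 has_derivative_const]
  have "((\<lambda>q. lam2 \<nu> a (u2 q) b) has_derivative (\<lambda>h. \<alpha> * D2 h)) (at p)" by simp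
  from transport_from_hodograph[OF \<Omega> p D2 this hodograph]
  show "pdt u2 p + lam2 \<nu> a (u2 p) b * pdx u2 p = 0" .
qed simp_all

theorem lemma4p2:
  fixes \<nu> a b :: real and \<Omega> :: "(real \<times> real) set"
  assumes "- \<nu> < b" and "b < a"
    and "open \<Omega>" and "\<Omega> \<subseteq> {p. snd p > 0}"
  shows
   "(\<forall>u2 u3 :: real \<times> real \<Rightarrow> real.
       (\<forall>p\<in>\<Omega>. u2 differentiable (at p) \<and> u3 differentiable (at p)) \<and>
       (\<forall>p\<in>\<Omega>. - \<nu> < u3 p \<and> u3 p < u2 p \<and> u2 p < a) \<and>
       (\<forall>(x, t)\<in>\<Omega>. x = lam2 \<nu> a (u2 (x, t)) (u3 (x, t)) * t \<and>
                     x = lam3 \<nu> a (u2 (x, t)) (u3 (x, t)) * t)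
       \<longrightarrow> whitham \<nu> \<Omega> (\<lambda>_. a) u2 u3) \<and>
    (\<forall>u2 :: real \<times> real \<Rightarrow> real.
       (\<forall>p\<in>\<Omega>. u2 differentiable (at p)) \<and>
       (\<forall>p\<in>\<Omega>. b < u2 p \<and> u2 p < a) \<and>
       (\<forall>(x, t)\<in>\<Omega>. x = lam2 \<nu> a (u2 (x, t)) b * t)
       \<longrightarrow> whitham \<nu> \<Omega> (\<lambda>_. a) u2 (\<lambda>_. b))"
proof (intro conjI allI impI; elim conjE)
  fix u2 u3 :: "real \<times> real \<Rightarrow> real"
  assume "\<forall>p\<in>\<Omega>. u2 differentiable (at p) \<and> u3 differentiable (at p)"
    and "\<forall>p\<in>\<Omega>. - \<nu> < u3 p \<and> u3 p < u2 p \<and> u2 p < a"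
    and hodograph: "\<forall>(x, t)\<in>\<Omega>. x = lam2 \<nu> a (u2 (x, t)) (u3 (x, t)) * t \<and>
                     x = lam3 \<nu> a (u2 (x, t)) (u3 (x, t)) * t"
  then show "whitham \<nu> \<Omega> (\<lambda>_. a) u2 u3"
    by (intro whitham_coincident_speeds[OF assms(3,4)]) (auto dest!: bspec[OF hodograph])
next
  fix u2 :: "real \<times> real \<Rightarrow> real"
  assume "\<forall>p\<in>\<Omega>. u2 differentiable (at p)" and "\<forall>p\<in>\<Omega>. b < u2 p \<and> u2 p < a"
    and hodograph: "\<forall>(x, t)\<in>\<Omega>. x = lam2 \<nu> a (u2 (x, t)) b * t"
  then show "whitham \<nu> \<Omega> (\<lambda>_. a) u2 (\<lambda>_. b)"
    by (intro whitham_constant_u3[OF assms(3) _ assms(1)]) (auto dest!: bspec[OF hodograph])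
qed

end
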